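(* Let $s\ge1$ and let $\vec M=(M_1,\dots,M_n)$ be any vector of positive integers with $2M_i+1\equiv0\pmod{p^s}$ for all $i$. Then for every $t=1,\dots,s$ one has $\mathcal M^t_{p^s}(\vec M)=\mathcal M^t_{p^s}$. In particular the filtration $0=\mathcal M^0_{p^s}(\vec M)\subset\mathcal M^1_{p^s}(\vec M)\subset\dots\subset\mathcal M^s_{p^s}(\vec M)$ does not depend on the choice of $\vec M$ and coincides with the filtration $0=\mathcal M^0_{p^s}\subset\dots\subset\mathcal M^s_{p^s}=\mathcal M_{p^s}$.
   Context: Let $p$ be an odd prime, $g\ge1$, $n=2g+1$, with $p>n$; $z=(z_1,\dots,z_n)$; $\pi_s$ denotes reduction modulo $p^s$ on $\mathbb Z[z]^n$. Quasi-constants: $f\in\mathbb Z[z]$ is a quasi-constant modulo $p^r$ if $\partial f/\partial z_i\in p^r\mathbb Z[z]$ for all $i$; these form a ring $\mathbb Z[z]_{p^r}$. For a positive integer $r$ put $M_r=(p^r-1)/2$, $\Phi_{p^r}(x,z)=\prod_{i=1}^n(x-z_i)^{M_r}$, expand $\Big(\frac{\Phi_{p^r}}{x-z_1},\dots,\frac{\Phi_{p^r}}{x-z_n}\Big)=\sum_iP^i_{p^r}(z)x^i$ with $P^i_{p^r}(z)\in\mathbb Z[z]^n$, and set $I^{[lp^r-1]}_{p^r}(z)=P^{lp^r-1}_{p^r}(z)$. For $1\le t\le s$ define $\mathcal M^t_{p^s}=\{\pi_s(\sum_{r=1}^t\sum_{l=1}^g c_{r,l}(z)\,p^{s-r}I^{[lp^r-1]}_{p^r}(z))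 : c_{r,l}\in\mathbb Z[z]_{p^r}\}$, $\mathcal M^0_{p^s}=0$, $\mathcal M_{p^s}=\mathcal M^s_{p^s}$. For $\vec M=(M_1,\dots,M_n)$ put $\Phi(x,z,\vec M)=\prod_{i=1}^n(x-z_i)^{M_i}$, expand $\Big(\frac{\Phi(x,z,\vec M)}{x-z_1},\dots,\frac{\Phi(x,z,\vec M)}{x-z_n}\Big)=\sum_iP^i(z,\vec M)x^i$, and set $I^{[m-1]}(z,\vec M)=P^{m-1}(z,\vec M)$. For $1\le t\le s$ define $\mathcal M^t_{p^s}(\vec M)=\{\pi_s(\sum_{r=1}^t\sum_{l\ge1}c_{r,l}(z)\,p^{s-r}I^{[lp^r-1]}(z,\vec M)) : c_{r,l}\in\mathbb Z[z]_{p^r}\text{, finitely many nonzero}\}$ and $\mathcal M^0_{p^s}(\vec M)=0$. *)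

theory Defs
  imports "HOL-Library.Poly_Mapping" "HOL-Computational_Algebra.Polynomial"
begin
text \<open>Z[z]: integer polynomials, monomials are finitely supported exponent vectors
  (variable z_(i+1) has index i); the ring structure is the convolution ring of Poly_Mapping.\<close>
type_synonym mpoly = "(nat \<Rightarrow>\<^sub>0 nat) \<Rightarrow>\<^sub>0 int"

definition Var :: "nat \<Rightarrow> mpoly" where
  "Var i = Poly_Mapping.single (Poly_Mapping.single i 1) 1"

definition in_Zz :: "nat \<Rightarrow> mpoly \<Rightarrow> bool" where
  "in_Zz n f \<longleftrightarrow> (\<forall>m \<in> Poly_Mapping.keys f. Poly_Mapping.keys m \<subseteq> {0..<n})"

definition pdz :: "nat \<Rightarrow> mpoly \<Rightarrow> mpoly" where
  "pdz i f = (\<Sum>m \<in> Poly_Mapping.keys f.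
      Poly_Mapping.single (m - Poly_Mapping.single i 1) (int (Poly_Mapping.lookup m i) * Poly_Mapping.lookup f m))"

definition quasi_const :: "nat \<Rightarrow> nat \<Rightarrow> nat \<Rightarrow> mpoly \<Rightarrow> bool" where
  "quasi_const n p r f \<longleftrightarrow> in_Zz n f \<and>
     (\<forall>i < n. \<exists>h. in_Zz n h \<and> pdz i f = of_int (int p ^ r) * h)"

definition pi_mod :: "nat \<Rightarrow> nat \<Rightarrow> mpoly \<Rightarrow> mpoly" where
  "pi_mod p s f = Poly_Mapping.map (\<lambda>a. a mod (int p ^ s)) f"

text \<open>The j-th component (j < n) of \<Phi>(x,z,M)/(x - z_j) as a polynomial in x over Z[z].\<close>
definition Phi_quot :: "nat \<Rightarrow> (nat \<Rightarrow> nat) \<Rightarrow> nat \<Rightarrow> mpoly poly" where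
  "Phi_quot n M j = [:- Var j, 1:] ^ (M j - 1) *
      (\<Prod>i \<in> {0..<n} - {j}. [:- Var i, 1:] ^ (M i))"

text \<open>I^[k](z, M) = P^k(z, M) \<in> Z[z]^n (components indexed 0..n-1, zero beyond).\<close>
definition Ivec :: "nat \<Rightarrow> (nat \<Rightarrow> nat) \<Rightarrow> nat \<Rightarrow> nat \<Rightarrow> mpoly" where
  "Ivec n M k j = (if j < n then coeff (Phi_quot n M j) k else 0)"

definition Istd :: "nat \<Rightarrow> nat \<Rightarrow> nat \<Rightarrow> nat \<Rightarrow> nat \<Rightarrow> mpoly" where
  "Istd n p r l j = Ivec n (\<lambda>_. (p ^ r - 1) div 2) (l * p ^ r - 1) j"

definition Mstd :: "nat \<Rightarrow> nat \<Rightarrow> nat \<Rightarrow> nat \<Rightarrow> (nat \<Rightarrow> mpoly) set" where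
  "Mstd p g s t = {(\<lambda>j. pi_mod p s
        (\<Sum>r \<in> {1..t}. \<Sum>l \<in> {1..g}. c r l * of_int (int p ^ (s - r)) * Istd (2*g+1) p r l j))
      | c. \<forall>r \<in> {1..t}. \<forall>l \<in> {1..g}. quasi_const (2*g+1) p r (c r l)}"

definition Mgen :: "nat \<Rightarrow> nat \<Rightarrow> nat \<Rightarrow> nat \<Rightarrow> (nat \<Rightarrow> nat) \<Rightarrow> (nat \<Rightarrow> mpoly) set" where
  "Mgen p g s t M = {(\<lambda>j. pi_mod p s
        (\<Sum>r \<in> {1..t}. \<Sum>l \<in> {l. 1 \<le> l \<and> c r l \<noteq> 0}.
            c r l * of_int (int p ^ (s - r)) * Ivec (2*g+1) M (l * p ^ r - 1) j))
      | c. \<forall>r \<in> {1..t}. finite {l. c r l \<noteq> 0} \<and>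
             (\<forall>l \<ge> 1. quasi_const (2*g+1) p r (c r l))}"

end

theory Submission
  imports Defs
begin

(* If p^r divides every 2 M_i + 1, then M_i = M_r + p^r b_i, hence
   Phi(x,z,M) = Phi_{p^r}(x,z) * G(x)^(p^r) with G = prod_i (x - z_i)^(b_i). Comparing
   coefficients, I^[l p^r - 1](z,M) = sum_m q_m I^[l p^r - 1 - m]_{p^r}(z), where q_m is the
   m-th coefficient of G^(p^r). Every q_m is a quasi-constant modulo p^r. If p^r divides m, the
   term is a level-r generator (or zero for degree reasons when its index exceeds g); if
   m = p^k u with p not dividing u and k < r, then p^(r-k) divides q_m = p^(r-k) q', q' is a
   quasi-constant modulo p^k, and the term lies in level k by induction on r. Conversely, G^(p^r)
   is monic of degree p^r D, so I^[(l+D) p^r - 1](z,M) is I^[l p^r - 1]_{p^r}(z) plus generators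
   of larger index and lower-level terms, and downward induction on l gives the reverse
   inclusion. *)

lemma lookup_of_int_mult:
  "Poly_Mapping.lookup (of_int d * (f::mpoly)) k = d * Poly_Mapping.lookup f k"
proof -
  have "(of_int d :: mpoly) = Poly_Mapping.single 0 d"
    by (simp flip: single_of_int)
  then have "of_int d * f = Poly_Mapping.map ((*) d) f"
    by (simp add: mult_map_scale_conv_mult)
  then show ?thesis
    by (simp add: Poly_Mapping.map.rep_eq when_def)
qed

lemma lookup_pi_mod: "Poly_Mapping.lookup (pi_mod p s f) k = Poly_Mapping.lookup f k mod (int p ^ s)"
  by (simp add: pi_mod_def Poly_Mapping.map.rep_eq when_def)

lemma pi_mod_add_multiple: "pi_mod p s (f + of_int (int p ^ s) * h) = pi_mod p s f"
  by (rule poly_mapping_eqI) (simp only: lookup_pi_mod Poly_Mapping.lookup_add lookup_of_int_mult, simp)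

lemma mpoly_cancel_of_int:
  assumes "d \<noteq> 0" "of_int d * f = of_int d * (g::mpoly)"
  shows "f = g"
proof (rule poly_mapping_eqI)
  fix k
  have "Poly_Mapping.lookup (of_int d * f) k = Poly_Mapping.lookup (of_int d * g) k"
    by (simp only: assms(2))
  with assms(1) show "Poly_Mapping.lookup f k = Poly_Mapping.lookup g k"
    by (simp add: lookup_of_int_mult)
qed

lemma mpoly_eq_of_int_mult_div:
  assumes "\<And>k. d dvd Poly_Mapping.lookup f k"
  shows "f = of_int d * Poly_Mapping.map (\<lambda>a. a div d) (f::mpoly)"
  by (rule poly_mapping_eqI) (simp add: lookup_of_int_mult Poly_Mapping.map.rep_eq when_def assms)

abbreviation var_exp :: "nat \<Rightarrow> (nat \<Rightarrow>\<^sub>0 nat)" where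
  "var_exp i \<equiv> Poly_Mapping.single i 1"

lemma minus_var_exp_eq_iff:
  assumes "Poly_Mapping.lookup a i \<ge> 1"
  shows "a - var_exp i = k \<longleftrightarrow> a = k + var_exp i"
  using assms
  by (auto intro!: poly_mapping_eqI simp: lookup_minus Poly_Mapping.lookup_add lookup_single when_def)

lemma lookup_pdz:
  "Poly_Mapping.lookup (pdz i f) k = int (Poly_Mapping.lookup k i + 1) * Poly_Mapping.lookup f (k + var_exp i)"
proof -
  have single_term: "Poly_Mapping.lookup (Poly_Mapping.single (m - var_exp i) (int (Poly_Mapping.lookup m i) * Poly_Mapping.lookup f m)) k
      = (if m = k + var_exp i then int (Poly_Mapping.lookup k i + 1) * Poly_Mapping.lookup f m else 0)" for m
  proof (cases "Poly_Mapping.lookup m i \<ge> 1")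
    case True
    then show ?thesis using minus_var_exp_eq_iff[OF True, of k]
      by (auto simp: lookup_single when_def Poly_Mapping.lookup_add)
  next
    case False
    then have "m \<noteq> k + var_exp i" by (auto simp: Poly_Mapping.lookup_add)
    with False show ?thesis by (simp add: lookup_single when_def)
  qed
  show ?thesis
    unfolding pdz_def lookup_sum single_term by (auto simp: sum.delta in_keys_iff)
qed

lemma pdz_add: "pdz i (f + g) = pdz i f + pdz i g"
  by (rule poly_mapping_eqI) (simp add: lookup_pdz Poly_Mapping.lookup_add algebra_simps)

lemma pdz_sum: "pdz i (\<Sum>x\<in>A. f x) = (\<Sum>x\<in>A. pdz i (f x))"
proof (induction A rule: infinite_finite_induct)
  case empty
  show ?case by (rule poly_mapping_eqI) (simp add: lookup_pdz)
qed (auto simp: pdz_add, rule poly_mapping_eqI, simp add: lookup_pdz)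

lemma pdz_single:
  "pdz i (Poly_Mapping.single a c) = Poly_Mapping.single (a - var_exp i) (int (Poly_Mapping.lookup a i) * c)"
proof (rule poly_mapping_eqI)
  fix k
  show "Poly_Mapping.lookup (pdz i (Poly_Mapping.single a c)) k
      = Poly_Mapping.lookup (Poly_Mapping.single (a - var_exp i) (int (Poly_Mapping.lookup a i) * c)) k"
  proof (cases "Poly_Mapping.lookup a i \<ge> 1")
    case True
    then show ?thesis using minus_var_exp_eq_iff[OF True, of k]
      by (auto simp: lookup_pdz lookup_single when_def Poly_Mapping.lookup_add)
  next
    case False
    then have "a \<noteq> k + var_exp i" by (auto simp: Poly_Mapping.lookup_add)
    with False show ?thesis by (auto simp: lookup_pdz lookup_single when_def)
  qed
qed

lemma mpoly_sum_singles:
  "(f::mpoly) = (\<Sum>a\<in>Poly_Mapping.keys f. Poly_Mapping.single a (Poly_Mapping.lookup f a))"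
  by (rule poly_mapping_eqI) (auto simp: lookup_sum lookup_single when_def sum.delta in_keys_iff)

lemma single_minus_var_exp_shift:
  "Poly_Mapping.single (a - var_exp i + b) (int (Poly_Mapping.lookup a i) * c)
   = Poly_Mapping.single (a + b - var_exp i) (int (Poly_Mapping.lookup a i) * c)"
proof (cases "Poly_Mapping.lookup a i \<ge> 1")
  case True
  then have "a - var_exp i + b = a + b - var_exp i"
    by (auto intro!: poly_mapping_eqI simp: lookup_minus Poly_Mapping.lookup_add lookup_single when_def)
  then show ?thesis by simp
qed (simp add: not_le)

lemma pdz_mult_single_single:
  "pdz i (Poly_Mapping.single a c * Poly_Mapping.single b d) =
   pdz i (Poly_Mapping.single a c) * Poly_Mapping.single b d
   + Poly_Mapping.single a c * pdz i (Poly_Mapping.single b d)"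
proof -
  have "pdz i (Poly_Mapping.single a c * Poly_Mapping.single b d)
      = Poly_Mapping.single (a + b - var_exp i) (int (Poly_Mapping.lookup (a + b) i) * (c * d))"
    by (simp add: mult_single pdz_single)
  also have "\<dots> = Poly_Mapping.single (a + b - var_exp i) (int (Poly_Mapping.lookup a i) * c * d)
      + Poly_Mapping.single (a + b - var_exp i) (int (Poly_Mapping.lookup b i) * c * d)"
    by (simp add: Poly_Mapping.lookup_add algebra_simps flip: single_add)
  moreover have "Poly_Mapping.single (a - var_exp i + b) (int (Poly_Mapping.lookup a i) * c * d)
      = Poly_Mapping.single (a + b - var_exp i) (int (Poly_Mapping.lookup a i) * c * d)"
    using single_minus_var_exp_shift[of a i b "c * d"] by (simp add: mult.assoc)
  moreover have "Poly_Mapping.single (a + (b - var_exp i)) (c * (int (Poly_Mapping.lookup b i) * d))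
      = Poly_Mapping.single (a + b - var_exp i) (int (Poly_Mapping.lookup b i) * c * d)"
    using single_minus_var_exp_shift[of b i a "c * d"] by (simp add: add.commute ac_simps)
  ultimately show ?thesis
    by (simp only: pdz_single mult_single)
qed

lemma pdz_mult: "pdz i (f * g) = pdz i f * g + f * pdz i g"
proof -
  let ?S = "\<lambda>h a. Poly_Mapping.single a (Poly_Mapping.lookup h a)"
  have single_left: "pdz i (?S f a * g) = pdz i (?S f a) * g + ?S f a * pdz i g" for a
  proof -
    have "pdz i (?S f a * g) = (\<Sum>b\<in>Poly_Mapping.keys g. pdz i (?S f a * ?S g b))"
      by (subst mpoly_sum_singles[of g]) (simp add: sum_distrib_left pdz_sum)
    also have "\<dots> = (\<Sum>b\<in>Poly_Mapping.keys g. pdz i (?S f a) * ?S g b + ?S f a * pdz i (?S g b))"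
      by (simp add: pdz_mult_single_single)
    also have "\<dots> = pdz i (?S f a) * (\<Sum>b\<in>Poly_Mapping.keys g. ?S g b)
        + ?S f a * pdz i (\<Sum>b\<in>Poly_Mapping.keys g. ?S g b)"
      by (simp add: sum.distrib sum_distrib_left pdz_sum)
    finally show ?thesis by (simp flip: mpoly_sum_singles)
  qed
  have "pdz i (f * g) = (\<Sum>a\<in>Poly_Mapping.keys f. pdz i (?S f a * g))"
    by (subst mpoly_sum_singles[of f]) (simp add: sum_distrib_right pdz_sum)
  also have "\<dots> = pdz i (\<Sum>a\<in>Poly_Mapping.keys f. ?S f a) * g + (\<Sum>a\<in>Poly_Mapping.keys f. ?S f a) * pdz i g"
    by (simp add: single_left sum.distrib sum_distrib_right pdz_sum)
  finally show ?thesis by (simp flip: mpoly_sum_singles)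
qed

lemma pdz_of_int [simp]: "pdz i (of_int d) = 0"
proof (rule poly_mapping_eqI)
  fix k
  have "Poly_Mapping.lookup (k + var_exp i) i \<noteq> 0" by (simp add: Poly_Mapping.lookup_add)
  then have "k + var_exp i \<noteq> 0" by auto
  then show "Poly_Mapping.lookup (pdz i (of_int d)) k = Poly_Mapping.lookup 0 k"
    by (simp add: lookup_pdz lookup_of_int when_def)
qed

lemma pdz_of_int_mult: "pdz i (of_int d * f) = of_int d * pdz i f"
  by (simp add: pdz_mult)

lemma keys_add_exp: "Poly_Mapping.keys ((a::nat \<Rightarrow>\<^sub>0 nat) + b) = Poly_Mapping.keys a \<union> Poly_Mapping.keys b"
  by (auto simp: in_keys_iff Poly_Mapping.lookup_add)

lemma in_Zz_of_int [simp]: "in_Zz n (of_int d)"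
  by (simp add: in_Zz_def flip: single_of_int)

lemma in_Zz_0 [simp]: "in_Zz n 0"
  using in_Zz_of_int[of n 0] by simp

lemma in_Zz_1 [simp]: "in_Zz n 1"
  using in_Zz_of_int[of n 1] by simp

lemma in_Zz_uminus [simp]: "in_Zz n (- f) \<longleftrightarrow> in_Zz n f"
  by (simp add: in_Zz_def)

lemma in_Zz_add [simp]: "in_Zz n f \<Longrightarrow> in_Zz n g \<Longrightarrow> in_Zz n (f + g)"
  unfolding in_Zz_def using keys_add[of f g] by blast

lemma in_Zz_mult [simp]: "in_Zz n f \<Longrightarrow> in_Zz n g \<Longrightarrow> in_Zz n (f * g)"
  unfolding in_Zz_def using keys_mult[of f g] by (fastforce simp: keys_add_exp)

lemma in_Zz_sum [simp]: "(\<And>x. x \<in> A \<Longrightarrow> in_Zz n (f x)) \<Longrightarrow> in_Zz n (\<Sum>x\<in>A. f x)"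
  by (induction A rule: infinite_finite_induct) auto

lemma in_Zz_prod [simp]: "(\<And>x. x \<in> A \<Longrightarrow> in_Zz n (f x)) \<Longrightarrow> in_Zz n (\<Prod>x\<in>A. f x)"
  by (induction A rule: infinite_finite_induct) auto

lemma in_Zz_power [simp]: "in_Zz n f \<Longrightarrow> in_Zz n (f ^ k)"
  by (induction k) auto

lemma in_Zz_of_nat [simp]: "in_Zz n (of_nat d)"
  using in_Zz_of_int[of n "int d"] by simp

lemma in_Zz_Var [simp]: "i < n \<Longrightarrow> in_Zz n (Var i)"
  by (simp add: Var_def in_Zz_def)

lemma in_Zz_pdz [simp]: "in_Zz n f \<Longrightarrow> in_Zz n (pdz i f)"
  unfolding in_Zz_def
proof
  fix m assume f: "\<forall>m\<in>Poly_Mapping.keys f. Poly_Mapping.keys m \<subseteq> {0..<n}"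
    and "m \<in> Poly_Mapping.keys (pdz i f)"
  then have "m + var_exp i \<in> Poly_Mapping.keys f" by (auto simp: in_keys_iff lookup_pdz)
  with f have "Poly_Mapping.keys (m + var_exp i) \<subseteq> {0..<n}" by blast
  then show "Poly_Mapping.keys m \<subseteq> {0..<n}" by (simp add: keys_add_exp)
qed

lemma in_Zz_map_div: "in_Zz n f \<Longrightarrow> in_Zz n (Poly_Mapping.map (\<lambda>a. a div d) f)"
  unfolding in_Zz_def by (auto simp: in_keys_iff Poly_Mapping.map.rep_eq when_def)

subsection \<open>Quasi-constants\<close>

lemma quasi_const_of_int [simp]: "quasi_const n p r (of_int d)"
  unfolding quasi_const_def by (auto intro!: exI[of _ 0])

lemma quasi_const_0 [simp]: "quasi_const n p r 0"
  using quasi_const_of_int[of n p r 0] by simp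

lemma quasi_const_add [simp]:
  assumes "quasi_const n p r f" "quasi_const n p r g"
  shows "quasi_const n p r (f + g)"
  unfolding quasi_const_def
proof (intro conjI allI impI)
  fix i assume "i < n"
  with assms obtain h1 h2 where "in_Zz n h1" "pdz i f = of_int (int p ^ r) * h1"
      "in_Zz n h2" "pdz i g = of_int (int p ^ r) * h2"
    unfolding quasi_const_def by blast
  then show "\<exists>h. in_Zz n h \<and> pdz i (f + g) = of_int (int p ^ r) * h"
    by (intro exI[of _ "h1 + h2"]) (simp add: pdz_add algebra_simps)
qed (use assms in \<open>simp add: quasi_const_def\<close>)

lemma quasi_const_mult [simp]:
  assumes "quasi_const n p r f" "quasi_const n p r g"
  shows "quasi_const n p r (f * g)"
  unfolding quasi_const_def
proof (intro conjI allI impI)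
  fix i assume "i < n"
  with assms obtain h1 h2 where "in_Zz n h1" "pdz i f = of_int (int p ^ r) * h1"
      "in_Zz n h2" "pdz i g = of_int (int p ^ r) * h2"
    unfolding quasi_const_def by blast
  with assms show "\<exists>h. in_Zz n h \<and> pdz i (f * g) = of_int (int p ^ r) * h"
    by (intro exI[of _ "h1 * g + f * h2"]) (simp add: quasi_const_def pdz_mult algebra_simps)
qed (use assms in \<open>simp add: quasi_const_def\<close>)

lemma quasi_const_mono:
  assumes "quasi_const n p r f" "k \<le> r"
  shows "quasi_const n p k f"
  unfolding quasi_const_def
proof (intro conjI allI impI)
  fix i assume "i < n"
  with assms(1) obtain h where "in_Zz n h" "pdz i f = of_int (int p ^ r) * h"
    unfolding quasi_const_def by blast
  moreover have "(of_int (int p ^ r) :: mpoly) = of_int (int p ^ k) * of_int (int p ^ (r - k))"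
    using assms(2) by (simp flip: power_add)
  ultimately show "\<exists>h. in_Zz n h \<and> pdz i f = of_int (int p ^ k) * h"
    by (intro exI[of _ "of_int (int p ^ (r - k)) * h"]) simp
qed (use assms in \<open>simp add: quasi_const_def\<close>)

lemma quasi_const_div_prime_power:
  assumes "quasi_const n p r (of_int (int p ^ (r - k)) * f)" "in_Zz n f" "k \<le> r" "p > 0"
  shows "quasi_const n p k f"
  unfolding quasi_const_def
proof (intro conjI allI impI)
  fix i assume "i < n"
  with assms(1) obtain h where h: "in_Zz n h" "pdz i (of_int (int p ^ (r - k)) * f) = of_int (int p ^ r) * h"
    unfolding quasi_const_def by blast
  have "(of_int (int p ^ r) :: mpoly) = of_int (int p ^ (r - k)) * of_int (int p ^ k)"
    using assms(3) by (simp flip: power_add)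
  with h have "of_int (int p ^ (r - k)) * pdz i f = of_int (int p ^ (r - k)) * (of_int (int p ^ k) * h)"
    by (simp add: pdz_of_int_mult mult.assoc del: of_int_power)
  then have "pdz i f = of_int (int p ^ k) * h"
    by (rule mpoly_cancel_of_int[rotated]) (use assms(4) in simp)
  with h show "\<exists>h. in_Zz n h \<and> pdz i f = of_int (int p ^ k) * h" by blast
qed (rule assms(2))

subsection \<open>Coefficients of \<open>p\<^sup>r\<close>-th powers\<close>

definition coeffs_in_Zz :: "nat \<Rightarrow> mpoly poly \<Rightarrow> bool" where
  "coeffs_in_Zz n P \<longleftrightarrow> (\<forall>k. in_Zz n (coeff P k))"

lemma coeffs_in_Zz_1 [simp]: "coeffs_in_Zz n 1"
  by (simp add: coeffs_in_Zz_def coeff_1)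

lemma coeffs_in_Zz_linear [simp]: "i < n \<Longrightarrow> coeffs_in_Zz n [:- Var i, 1:]"
  by (simp add: coeffs_in_Zz_def coeff_pCons split: nat.splits)

lemma coeffs_in_Zz_mult [simp]: "coeffs_in_Zz n P \<Longrightarrow> coeffs_in_Zz n Q \<Longrightarrow> coeffs_in_Zz n (P * Q)"
  by (simp add: coeffs_in_Zz_def coeff_mult)

lemma coeffs_in_Zz_power [simp]: "coeffs_in_Zz n P \<Longrightarrow> coeffs_in_Zz n (P ^ k)"
  by (induction k) auto

lemma coeffs_in_Zz_prod [simp]:
  "(\<And>x. x \<in> A \<Longrightarrow> coeffs_in_Zz n (f x)) \<Longrightarrow> coeffs_in_Zz n (\<Prod>x\<in>A. f x)"
  by (induction A rule: infinite_finite_induct) auto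

definition pdz_poly :: "nat \<Rightarrow> mpoly poly \<Rightarrow> mpoly poly" where
  "pdz_poly i P = map_poly (pdz i) P"

lemma coeff_pdz_poly: "coeff (pdz_poly i P) k = pdz i (coeff P k)"
  by (simp add: pdz_poly_def coeff_map_poly pdz_sum[of i "\<lambda>_. 0" "{}", simplified])

lemma coeffs_in_Zz_pdz_poly [simp]: "coeffs_in_Zz n P \<Longrightarrow> coeffs_in_Zz n (pdz_poly i P)"
  by (simp add: coeffs_in_Zz_def coeff_pdz_poly)

lemma pdz_poly_mult: "pdz_poly i (P * Q) = pdz_poly i P * Q + P * pdz_poly i Q"
  by (rule poly_eqI) (simp add: coeff_pdz_poly coeff_mult pdz_sum pdz_mult sum.distrib)

lemma pdz_poly_power: "pdz_poly i (P ^ Suc N) = smult (of_nat (Suc N)) (P ^ N * pdz_poly i P)"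
proof (induction N)
  case 0
  then show ?case by (simp add: pdz_poly_mult)
next
  case (Suc N)
  have "pdz_poly i (P ^ Suc (Suc N)) = pdz_poly i P * P ^ Suc N + P * pdz_poly i (P ^ Suc N)"
    by (simp only: power_Suc[of P "Suc N"] pdz_poly_mult)
  also have "\<dots> = smult (1 + of_nat (Suc N)) (P ^ Suc N * pdz_poly i P)"
    unfolding Suc by (simp only: mult_smult_right power_Suc ac_simps smult_add_left smult_1_left)
  finally show ?case by (simp only: of_nat_Suc[of "Suc N"] add.commute)
qed

text \<open>The derivative of \<open>G^(p^r)\<close> in any \<open>z_i\<close> carries the factor \<open>p^r\<close>.\<close>

lemma coeff_power_quasi_const:
  assumes "coeffs_in_Zz n G" "p > 0"
  shows "quasi_const n p r (coeff (G ^ (p ^ r)) m)"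
  unfolding quasi_const_def
proof (intro conjI allI impI)
  show "in_Zz n (coeff (G ^ p ^ r) m)"
    using coeffs_in_Zz_power[OF assms(1)] by (simp add: coeffs_in_Zz_def)
next
  fix i assume "i < n"
  obtain N where N: "p ^ r = Suc N" using assms(2) by (metis gr0_implies_Suc zero_less_power)
  have "pdz i (coeff (G ^ (p ^ r)) m) = of_nat (Suc N) * coeff (G ^ N * pdz_poly i G) m"
    by (simp only: coeff_pdz_poly[symmetric] N pdz_poly_power coeff_smult)
  also have "\<dots> = of_int (int p ^ r) * coeff (G ^ N * pdz_poly i G) m"
    by (metis N of_int_of_nat_eq of_nat_power)
  finally have "pdz i (coeff (G ^ (p ^ r)) m) = of_int (int p ^ r) * coeff (G ^ N * pdz_poly i G) m" .
  moreover have "in_Zz n (coeff (G ^ N * pdz_poly i G) m)"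
    using coeffs_in_Zz_mult[OF coeffs_in_Zz_power[OF assms(1)] coeffs_in_Zz_pdz_poly[OF assms(1)]]
    by (simp add: coeffs_in_Zz_def)
  ultimately show "\<exists>h. in_Zz n h \<and> pdz i (coeff (G ^ p ^ r) m) = of_int (int p ^ r) * h"
    by blast
qed

lemma coeff_power_prime_power_dvd:
  fixes G :: "mpoly poly"
  assumes "prime p" "k \<le> r" "m = p ^ k * u" "\<not> p dvd u"
  shows "int p ^ (r - k) dvd Poly_Mapping.lookup (coeff (G ^ (p ^ r)) m) x"
proof -
  have "u \<noteq> 0" using assms(4) by (metis dvd_0_right)
  then have "m \<noteq> 0" using assms(1,3) by (simp add: prime_gt_0_nat)
  then obtain m' where m': "m = Suc m'" using not0_implies_Suc by blast
  have "of_nat m * coeff (G ^ (p ^ r)) m = coeff (pderiv (G ^ (p ^ r))) m'"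
    by (simp add: coeff_pderiv m')
  also have "\<dots> = of_nat (p ^ r) * coeff (G ^ (p ^ r - 1) * pderiv G) m'"
    by (simp add: pderiv_power)
  finally have "int m * Poly_Mapping.lookup (coeff (G ^ (p ^ r)) m) x
      = int (p ^ r) * Poly_Mapping.lookup (coeff (G ^ (p ^ r - 1) * pderiv G) m') x"
    by (metis lookup_of_int_mult of_int_of_nat_eq)
  then have "int p ^ k * (int u * Poly_Mapping.lookup (coeff (G ^ (p ^ r)) m) x)
      = int p ^ k * (int p ^ (r - k) * Poly_Mapping.lookup (coeff (G ^ (p ^ r - 1) * pderiv G) m') x)"
    using assms(2,3) by (simp add: algebra_simps flip: power_add)
  then have "int p ^ (r - k) dvd int u * Poly_Mapping.lookup (coeff (G ^ (p ^ r)) m) x"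
    using assms(1) by (simp add: prime_gt_0_nat)
  moreover have "coprime (int p ^ (r - k)) (int u)"
    using assms(1,4) by (simp add: prime_imp_coprime)
  ultimately show ?thesis by (simp add: coprime_dvd_mult_right_iff)
qed

lemma coeff_power_factor:
  assumes "coeffs_in_Zz n G" "prime p" "k \<le> r" "m = p ^ k * u" "\<not> p dvd u"
  obtains q where "coeff (G ^ (p ^ r)) m = of_int (int p ^ (r - k)) * q" "quasi_const n p k q"
proof
  let ?c = "coeff (G ^ (p ^ r)) m" and ?d = "int p ^ (r - k)"
  show eq: "?c = of_int ?d * Poly_Mapping.map (\<lambda>a. a div ?d) ?c"
    by (rule mpoly_eq_of_int_mult_div) (rule coeff_power_prime_power_dvd[OF assms(2-5)])
  have "in_Zz n ?c"
    using coeffs_in_Zz_power[OF assms(1)] by (simp add: coeffs_in_Zz_def)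
  moreover have "quasi_const n p r ?c"
    using coeff_power_quasi_const assms(1,2) prime_gt_0_nat by blast
  ultimately show "quasi_const n p k (Poly_Mapping.map (\<lambda>a. a div ?d) ?c)"
    using eq quasi_const_div_prime_power[of n p r k] in_Zz_map_div assms(2,3) prime_gt_0_nat
    by metis
qed

text \<open>\<open>in_filtration n p A W s t V\<close> says that componentwise
  \<open>V = sum_{1 <= r <= t} sum_{l in A} c_{r,l} p^(s-r) W_{r,l}  (mod p^s)\<close>, with finitely many
  \<open>c_{r,l} \<noteq> 0\<close>, each a quasi-constant modulo \<open>p^r\<close>. The reductions of such \<open>V\<close> form the
  \<open>t\<close>-th step of the filtration generated by \<open>W\<close>; the paper's \<open>M^t_{p^s}\<close> and
  \<open>M^t_{p^s}(M)\<close> are the cases \<open>W_{r,l} = I^[l p^r - 1]_{p^r}\<close> and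
  \<open>W_{r,l} = I^[l p^r - 1](z,M)\<close>.\<close>

definition filtration_comb ::
    "nat \<Rightarrow> (nat \<Rightarrow> nat \<Rightarrow> nat \<Rightarrow> mpoly) \<Rightarrow> (nat \<Rightarrow> nat \<Rightarrow> mpoly) \<Rightarrow> nat \<Rightarrow> nat \<Rightarrow> nat \<Rightarrow> mpoly" where
  "filtration_comb p W c s t j =
     (\<Sum>r\<in>{1..t}. \<Sum>l\<in>{l. c r l \<noteq> 0}. c r l * of_int (int p ^ (s - r)) * W r l j)"

definition admissible_coeffs :: "nat \<Rightarrow> nat \<Rightarrow> nat set \<Rightarrow> nat \<Rightarrow> (nat \<Rightarrow> nat \<Rightarrow> mpoly) \<Rightarrow> bool" where
  "admissible_coeffs n p A t c \<longleftrightarrow> (\<forall>r\<in>{1..t}. finite {l. c r l \<noteq> 0} \<and>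
     (\<forall>l\<in>A. quasi_const n p r (c r l)) \<and> (\<forall>l. l \<notin> A \<longrightarrow> c r l = 0))"

lemma admissible_coeffsD:
  assumes "admissible_coeffs n p A t c" "r \<in> {1..t}"
  shows "finite {l. c r l \<noteq> 0}" "{l. c r l \<noteq> 0} \<subseteq> A" "l \<in> A \<Longrightarrow> quasi_const n p r (c r l)"
  using assms unfolding admissible_coeffs_def by auto

definition in_filtration ::
    "nat \<Rightarrow> nat \<Rightarrow> nat set \<Rightarrow> (nat \<Rightarrow> nat \<Rightarrow> nat \<Rightarrow> mpoly) \<Rightarrow> nat \<Rightarrow> nat \<Rightarrow> (nat \<Rightarrow> mpoly) \<Rightarrow> bool" where
  "in_filtration n p A W s t V \<longleftrightarrow> (\<exists>c. admissible_coeffs n p A t c \<and>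
     (\<forall>j. \<exists>h. V j = filtration_comb p W c s t j + of_int (int p ^ s) * h))"

lemma filtration_comb_eq_sum:
  assumes "\<And>r. r \<in> {1..t} \<Longrightarrow> finite (S r) \<and> {l. c r l \<noteq> 0} \<subseteq> S r"
  shows "filtration_comb p W c s t j =
    (\<Sum>r\<in>{1..t}. \<Sum>l\<in>S r. c r l * of_int (int p ^ (s - r)) * W r l j)"
  unfolding filtration_comb_def using assms
  by (intro sum.cong refl sum.mono_neutral_left) auto

lemma pi_mod_congruent_comb:
  assumes "\<forall>j. \<exists>h. V j = filtration_comb p W c s t j + of_int (int p ^ s) * h"
  shows "(\<lambda>j. pi_mod p s (V j)) = (\<lambda>j. pi_mod p s (filtration_comb p W c s t j))"
proof
  fix j
  obtain h where "V j = filtration_comb p W c s t j + of_int (int p ^ s) * h"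
    using assms by blast
  then show "pi_mod p s (V j) = pi_mod p s (filtration_comb p W c s t j)"
    by (simp only: pi_mod_add_multiple)
qed

lemma in_filtration_zero: "in_filtration n p A W s t (\<lambda>j. 0)"
  unfolding in_filtration_def admissible_coeffs_def filtration_comb_def
  by (intro exI[of _ "\<lambda>_ _. 0"]) (auto intro!: exI[of _ 0])

lemma in_filtration_mod_one: "in_filtration n p A W 0 t V"
  unfolding in_filtration_def admissible_coeffs_def filtration_comb_def
  by (intro exI[of _ "\<lambda>_ _. 0"]) (auto intro!: exI[of _ "V _"])

lemma in_filtration_subst: "in_filtration n p A W s t V' \<Longrightarrow> (\<And>j. V j = V' j) \<Longrightarrow> in_filtration n p A W s t V"
  by (metis ext)

lemma in_filtration_cong:
  assumes "in_filtration n p A W s t V'" "\<And>j. \<exists>h. V j = V' j + of_int (int p ^ s) * h"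
  shows "in_filtration n p A W s t V"
proof -
  obtain c where c: "admissible_coeffs n p A t c"
      "\<forall>j. \<exists>h. V' j = filtration_comb p W c s t j + of_int (int p ^ s) * h"
    using assms(1) unfolding in_filtration_def by blast
  have "\<exists>h. V j = filtration_comb p W c s t j + of_int (int p ^ s) * h" for j
  proof -
    obtain h where "V' j = filtration_comb p W c s t j + of_int (int p ^ s) * h" using c(2) by blast
    moreover obtain h' where "V j = V' j + of_int (int p ^ s) * h'" using assms(2) by blast
    ultimately show ?thesis by (intro exI[of _ "h + h'"]) (simp add: algebra_simps)
  qed
  with c(1) show ?thesis unfolding in_filtration_def by blast
qed

lemma in_filtration_add:
  assumes "in_filtration n p A W s t V" "in_filtration n p A W s t V'"
  shows "in_filtration n p A W s t (\<lambda>j. V j + V' j)"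
proof -
  obtain c where c: "admissible_coeffs n p A t c"
      "\<forall>j. \<exists>h. V j = filtration_comb p W c s t j + of_int (int p ^ s) * h"
    using assms(1) unfolding in_filtration_def by blast
  obtain c' where c': "admissible_coeffs n p A t c'"
      "\<forall>j. \<exists>h. V' j = filtration_comb p W c' s t j + of_int (int p ^ s) * h"
    using assms(2) unfolding in_filtration_def by blast
  define d where "d r l = c r l + c' r l" for r l
  define S where "S r = {l. c r l \<noteq> 0} \<union> {l. c' r l \<noteq> 0}" for r
  have S: "finite (S r)" if "r \<in> {1..t}" for r
    using c(1) c'(1) that unfolding admissible_coeffs_def S_def by auto
  have "admissible_coeffs n p A t d"
    unfolding admissible_coeffs_def
  proof (intro ballI conjI allI impI)
    fix r assume r: "r \<in> {1..t}"
    show "finite {l. d r l \<noteq> 0}" by (rule finite_subset[OF _ S[OF r]]) (auto simp: S_def d_def)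
    show "quasi_const n p r (d r l)" if "l \<in> A" for l
      using c(1) c'(1) r that unfolding admissible_coeffs_def d_def by auto
    show "d r l = 0" if "l \<notin> A" for l
      using c(1) c'(1) r that unfolding admissible_coeffs_def d_def by auto
  qed
  moreover have "filtration_comb p W d s t j = filtration_comb p W c s t j + filtration_comb p W c' s t j" for j
  proof -
    have "filtration_comb p W e s t j = (\<Sum>r\<in>{1..t}. \<Sum>l\<in>S r. e r l * of_int (int p ^ (s - r)) * W r l j)"
      if "e = c \<or> e = c' \<or> e = d" for e
      by (rule filtration_comb_eq_sum) (use S that in \<open>auto simp: S_def d_def\<close>)
    then show ?thesis by (simp add: d_def distrib_right sum.distrib)
  qed
  moreover have "\<exists>h. V j + V' j = filtration_comb p W d s t j + of_int (int p ^ s) * h" for j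
  proof -
    obtain h h' where "V j = filtration_comb p W c s t j + of_int (int p ^ s) * h"
        "V' j = filtration_comb p W c' s t j + of_int (int p ^ s) * h'"
      using c(2) c'(2) by blast
    with calculation(2) show ?thesis by (intro exI[of _ "h + h'"]) (simp add: algebra_simps)
  qed
  ultimately show ?thesis unfolding in_filtration_def by blast
qed

lemma in_filtration_scale:
  assumes "in_filtration n p A W s t V" "quasi_const n p t q"
  shows "in_filtration n p A W s t (\<lambda>j. q * V j)"
proof -
  obtain c where c: "admissible_coeffs n p A t c"
      "\<forall>j. \<exists>h. V j = filtration_comb p W c s t j + of_int (int p ^ s) * h"
    using assms(1) unfolding in_filtration_def by blast
  define d where "d r l = q * c r l" for r l
  have fin: "finite {l. c r l \<noteq> 0}" if "r \<in> {1..t}" for r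
    using c(1) that unfolding admissible_coeffs_def by auto
  have "admissible_coeffs n p A t d"
    using c(1) assms(2) unfolding admissible_coeffs_def d_def
    by (auto intro!: finite_subset[OF _ fin] quasi_const_mult quasi_const_mono[OF assms(2)])
  moreover have "filtration_comb p W d s t j = q * filtration_comb p W c s t j" for j
  proof -
    have "filtration_comb p W e s t j =
        (\<Sum>r\<in>{1..t}. \<Sum>l\<in>{l. c r l \<noteq> 0}. e r l * of_int (int p ^ (s - r)) * W r l j)"
      if "e = c \<or> e = d" for e
      by (rule filtration_comb_eq_sum) (use fin that in \<open>auto simp: d_def\<close>)
    then show ?thesis by (simp add: d_def sum_distrib_left mult.assoc)
  qed
  moreover have "\<exists>h. q * V j = filtration_comb p W d s t j + of_int (int p ^ s) * h" for j
  proof -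
    obtain h where "V j = filtration_comb p W c s t j + of_int (int p ^ s) * h"
      using c(2) by blast
    with calculation(2) show ?thesis by (intro exI[of _ "q * h"]) (simp add: algebra_simps)
  qed
  ultimately show ?thesis unfolding in_filtration_def by blast
qed

lemma in_filtration_sum:
  assumes "finite I" "\<And>i. i \<in> I \<Longrightarrow> in_filtration n p A W s t (V i)"
  shows "in_filtration n p A W s t (\<lambda>j. \<Sum>i\<in>I. V i j)"
  using assms
proof (induction I rule: finite_induct)
  case empty
  then show ?case by (simp add: in_filtration_zero)
next
  case (insert x F)
  then have "in_filtration n p A W s t (\<lambda>j. V x j + (\<Sum>i\<in>F. V i j))"
    by (intro in_filtration_add) auto
  with insert show ?case by (simp add: in_filtration_subst)
qed

lemma in_filtration_mono:
  assumes "in_filtration n p A W s t V" "t \<le> t'"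
  shows "in_filtration n p A W s t' V"
proof -
  obtain c where c: "admissible_coeffs n p A t c"
      "\<forall>j. \<exists>h. V j = filtration_comb p W c s t j + of_int (int p ^ s) * h"
    using assms(1) unfolding in_filtration_def by blast
  define d where "d r l = (if r \<le> t then c r l else 0)" for r l
  have "admissible_coeffs n p A t' d"
    using c(1) unfolding admissible_coeffs_def d_def by auto
  moreover have "filtration_comb p W d s t' j = filtration_comb p W c s t j" for j
  proof -
    have "filtration_comb p W d s t' j =
        (\<Sum>r\<in>{1..t}. \<Sum>l\<in>{l. d r l \<noteq> 0}. d r l * of_int (int p ^ (s - r)) * W r l j)"
      unfolding filtration_comb_def
      by (rule sum.mono_neutral_right) (use assms(2) in \<open>auto simp: d_def\<close>)
    then show ?thesis unfolding filtration_comb_def by (simp add: d_def)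
  qed
  ultimately show ?thesis using c(2) unfolding in_filtration_def by auto
qed

lemma in_filtration_lift:
  assumes "in_filtration n p A W r t V" "t \<le> r" "r \<le> s"
  shows "in_filtration n p A W s t (\<lambda>j. of_int (int p ^ (s - r)) * V j)"
proof -
  obtain c where c: "admissible_coeffs n p A t c"
      "\<forall>j. \<exists>h. V j = filtration_comb p W c r t j + of_int (int p ^ r) * h"
    using assms(1) unfolding in_filtration_def by blast
  have pow: "(of_int (int p ^ (s - r)) :: mpoly) * of_int (int p ^ (r - k)) = of_int (int p ^ (s - k))"
    if "k \<le> r" for k
    using that assms(3) by (simp flip: of_int_mult power_add)
  have comb: "of_int (int p ^ (s - r)) * filtration_comb p W c r t j = filtration_comb p W c s t j" for j
    unfolding filtration_comb_def sum_distrib_left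
    by (intro sum.cong refl) (use assms(2) pow in \<open>auto simp: ac_simps\<close>)
  have "\<exists>h. of_int (int p ^ (s - r)) * V j = filtration_comb p W c s t j + of_int (int p ^ s) * h" for j
  proof -
    obtain h where "V j = filtration_comb p W c r t j + of_int (int p ^ r) * h"
      using c(2) by blast
    with comb pow[of 0] show ?thesis
      by (intro exI[of _ h]) (simp add: distrib_left mult.assoc[symmetric])
  qed
  with c(1) show ?thesis unfolding in_filtration_def by blast
qed

lemma in_filtration_generator:
  assumes "1 \<le> r" "l \<in> A"
  shows "in_filtration n p A W r r (W r l)"
proof -
  define c where "c r' l' = (if r' = r \<and> l' = l then (1::mpoly) else 0)" for r' l'
  have "admissible_coeffs n p A r c"
    using assms quasi_const_of_int[of n p _ 1] unfolding admissible_coeffs_def c_def by auto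
  moreover have "filtration_comb p W c r r j = W r l j" for j
  proof -
    have "filtration_comb p W c r r j = (\<Sum>r'\<in>{1..r}. if r' = r then W r l j else 0)"
      unfolding filtration_comb_def
      by (intro sum.cong refl) (auto simp: c_def)
    then show ?thesis using assms(1) by simp
  qed
  ultimately show ?thesis
    unfolding in_filtration_def by (intro exI[of _ c]) (auto intro!: exI[of _ 0])
qed

lemma in_filtration_transfer:
  assumes "in_filtration n p A W s t V" "t \<le> s"
    and "\<And>r l. r \<in> {1..t} \<Longrightarrow> l \<in> A \<Longrightarrow> in_filtration n p A' W' r r (W r l)"
  shows "in_filtration n p A' W' s t V"
proof -
  obtain c where c: "admissible_coeffs n p A t c"
      "\<forall>j. \<exists>h. V j = filtration_comb p W c s t j + of_int (int p ^ s) * h"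
    using assms(1) unfolding in_filtration_def by blast
  have "in_filtration n p A' W' s t (\<lambda>j. filtration_comb p W c s t j)"
    unfolding filtration_comb_def
  proof (intro in_filtration_sum)
    fix r l assume r: "r \<in> {1..t}" and l: "l \<in> {l. c r l \<noteq> 0}"
    then have "l \<in> A"
      using c(1) unfolding admissible_coeffs_def by auto
    with r c(1) have "quasi_const n p r (c r l)"
      unfolding admissible_coeffs_def by blast
    then have "in_filtration n p A' W' r r (\<lambda>j. c r l * W r l j)"
      using in_filtration_scale assms(3) r \<open>l \<in> A\<close> by blast
    then have "in_filtration n p A' W' s r (\<lambda>j. of_int (int p ^ (s - r)) * (c r l * W r l j))"
      by (rule in_filtration_lift) (use r assms(2) in auto)
    then have "in_filtration n p A' W' s t (\<lambda>j. of_int (int p ^ (s - r)) * (c r l * W r l j))"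
      by (rule in_filtration_mono) (use r in auto)
    then show "in_filtration n p A' W' s t (\<lambda>j. c r l * of_int (int p ^ (s - r)) * W r l j)"
      by (rule in_filtration_subst) (simp add: ac_simps)
  qed (use c(1) in \<open>auto simp: admissible_coeffs_def\<close>)
  then show ?thesis
    by (rule in_filtration_cong) (use c(2) in auto)
qed

subsection \<open>Factoring \<open>\<Phi>(x,z,M)\<close>\<close>

definition Mr :: "nat \<Rightarrow> nat \<Rightarrow> nat" where
  "Mr p r = (p ^ r - 1) div 2"

lemma Mr_double: "odd p \<Longrightarrow> 2 * Mr p r + 1 = p ^ r"
  unfolding Mr_def by (simp add: odd_pos)

lemma Mr_double_int: "odd p \<Longrightarrow> 2 * int (Mr p r) + 1 = int p ^ r"
  using Mr_double[of p r] by (metis of_nat_1 of_nat_add of_nat_mult of_nat_numeral of_nat_power)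

lemma Mr_pos:
  assumes "odd p" "p > 1" "r \<ge> 1"
  shows "Mr p r \<ge> 1"
proof -
  have "p ^ r \<ge> p" using assms(2,3) by (simp add: self_le_power)
  moreover have "p \<ge> 3" using assms(1,2) by presburger
  ultimately show ?thesis using Mr_double[OF assms(1), of r] by simp
qed

lemma power_dvd_double_Mr_Suc: "odd p \<Longrightarrow> k \<le> r \<Longrightarrow> int p ^ k dvd 2 * int (Mr p r) + 1"
  by (simp add: Mr_double_int le_imp_power_dvd)

lemma Istd_eq_Ivec_Mr: "Istd n p r l = Ivec n (\<lambda>_. Mr p r) (l * p ^ r - 1)"
  by (simp add: Istd_def Mr_def fun_eq_iff)

lemma eq_Mr_plus_multiple:
  assumes "odd p" "int p ^ r dvd 2 * int m + 1"
  shows "m = Mr p r + p ^ r * ((m - Mr p r) div p ^ r)"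
proof -
  have "int p ^ r dvd (2 * int m + 1) - (2 * int (Mr p r) + 1)"
    using assms(2) Mr_double_int[OF assms(1), of r] by (simp add: dvd_diff)
  then have "int p ^ r dvd 2 * (int m - int (Mr p r))"
    by (simp add: algebra_simps)
  moreover have "coprime (int p ^ r) 2"
    using assms(1) by (simp add: coprime_commute)
  ultimately have "int p ^ r dvd int m - int (Mr p r)"
    using coprime_dvd_mult_right_iff by blast
  moreover have "Mr p r \<le> m"
    using zdvd_imp_le[OF assms(2)] Mr_double_int[OF assms(1), of r] by linarith
  ultimately have "p ^ r dvd m - Mr p r"
    by (metis of_nat_diff of_nat_dvd_iff of_nat_power)
  with \<open>Mr p r \<le> m\<close> show ?thesis
    by simp
qed

abbreviation x_minus_z :: "nat \<Rightarrow> mpoly poly" where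
  "x_minus_z i \<equiv> [:- Var i, 1:]"

definition G_poly :: "nat \<Rightarrow> (nat \<Rightarrow> nat) \<Rightarrow> mpoly poly" where
  "G_poly n b = (\<Prod>i\<in>{0..<n}. x_minus_z i ^ b i)"

lemma coeffs_in_Zz_G_poly: "coeffs_in_Zz n (G_poly n b)"
  unfolding G_poly_def by (intro coeffs_in_Zz_prod coeffs_in_Zz_power coeffs_in_Zz_linear) simp

lemma Phi_quot_eq_mult_G_poly_power:
  assumes "\<And>i. i < n \<Longrightarrow> M i = Mr p r + p ^ r * b i" "j < n" "Mr p r \<ge> 1"
  shows "Phi_quot n M j = Phi_quot n (\<lambda>_. Mr p r) j * G_poly n b ^ (p ^ r)"
proof -
  let ?m = "Mr p r" and ?N = "p ^ r"
  have "G_poly n b ^ ?N = (\<Prod>i\<in>{0..<n}. x_minus_z i ^ (b i * ?N))"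
    unfolding G_poly_def prod_power_distrib by (simp add: power_mult)
  also have "\<dots> = x_minus_z j ^ (b j * ?N) * (\<Prod>i\<in>{0..<n} - {j}. x_minus_z i ^ (b i * ?N))"
    using prod.remove[of "{0..<n}" j] assms(2) by simp
  finally have G: "G_poly n b ^ ?N = x_minus_z j ^ (b j * ?N) * (\<Prod>i\<in>{0..<n} - {j}. x_minus_z i ^ (b i * ?N))" .
  have Mj: "M j - 1 = (?m - 1) + b j * ?N"
    using assms by (simp add: mult.commute)
  have P: "(\<Prod>i\<in>{0..<n} - {j}. x_minus_z i ^ M i)
      = (\<Prod>i\<in>{0..<n} - {j}. x_minus_z i ^ ?m) * (\<Prod>i\<in>{0..<n} - {j}. x_minus_z i ^ (b i * ?N))"
    by (simp add: prod.distrib[symmetric] assms(1) power_add mult.commute)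
  show ?thesis
    unfolding Phi_quot_def G Mj P power_add by (simp add: ac_simps)
qed

lemma Ivec_eq_convolution:
  assumes "\<And>i. i < n \<Longrightarrow> M i = Mr p r + p ^ r * b i" "Mr p r \<ge> 1"
  shows "Ivec n M k j = (\<Sum>m\<le>k. coeff (G_poly n b ^ (p ^ r)) m * Ivec n (\<lambda>_. Mr p r) (k - m) j)"
proof (cases "j < n")
  case True
  have "Ivec n M k j = coeff (G_poly n b ^ (p ^ r) * Phi_quot n (\<lambda>_. Mr p r) j) k"
    using True Phi_quot_eq_mult_G_poly_power[OF assms(1) True assms(2)]
    by (simp add: Ivec_def mult.commute)
  then show ?thesis
    unfolding coeff_mult Ivec_def using True by simp
qed (simp add: Ivec_def)

lemma degree_Phi_quot_const:
  assumes "j < n"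
  shows "degree (Phi_quot n (\<lambda>_. m) j) \<le> (m - 1) + (n - 1) * m"
proof -
  have "degree (\<Prod>i\<in>{0..<n} - {j}. x_minus_z i ^ m) \<le> (\<Sum>i\<in>{0..<n} - {j}. degree (x_minus_z i ^ m))"
    using degree_prod_sum_le[of "{0..<n} - {j}" "\<lambda>i. x_minus_z i ^ m"] by (simp add: o_def)
  also have "\<dots> = card ({0..<n} - {j}) * m"
    by (simp add: degree_linear_power)
  also have "\<dots> = (n - 1) * m"
    using assms by simp
  finally have "degree (\<Prod>i\<in>{0..<n} - {j}. x_minus_z i ^ m) \<le> (n - 1) * m" .
  moreover have "degree (x_minus_z j ^ (m - 1)) = m - 1"
    by (simp add: degree_linear_power)
  ultimately show ?thesis
    unfolding Phi_quot_def
    using degree_mult_le[of "x_minus_z j ^ (m - 1)" "\<Prod>i\<in>{0..<n} - {j}. x_minus_z i ^ m"] by linarith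
qed

text \<open>The only use of \<open>n = 2g + 1\<close>: \<open>\<Phi>_{p^r}/(x - z_j)\<close> has degree \<open>(2g + 1) M_r - 1\<close>, which is
  less than \<open>l p^r - 1\<close> once \<open>l > g\<close>.\<close>

lemma Istd_eq_0:
  assumes "odd p" "p > 1" "r \<ge> 1" "l > g"
  shows "Istd (2*g+1) p r l j = 0"
proof (cases "j < 2*g+1")
  case True
  let ?m = "Mr p r"
  have "?m \<ge> 1" by (rule Mr_pos[OF assms(1-3)])
  moreover have "l * p ^ r \<ge> (g + 1) * (2 * ?m + 1)"
    using assms(4) Mr_double[OF assms(1), of r] by (metis Suc_eq_plus1 Suc_le_eq mult_le_mono1)
  ultimately have "(?m - 1) + (2*g+1 - 1) * ?m < l * p ^ r - 1"
    by (simp add: algebra_simps)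
  with degree_Phi_quot_const[OF True, of ?m] show ?thesis
    by (simp add: Istd_eq_Ivec_Mr Ivec_def coeff_eq_0)
qed (simp add: Istd_def Ivec_def)

lemma G_poly_power_degree: "degree (G_poly n b ^ N) = N * (\<Sum>i<n. b i)"
  and G_poly_power_lead_coeff: "lead_coeff (G_poly n b ^ N) = 1"
proof -
  have eq: "G_poly n b ^ N = (\<Prod>i\<in>{0..<n}. x_minus_z i ^ (b i * N))"
    unfolding G_poly_def prod_power_distrib by (simp add: power_mult)
  show "degree (G_poly n b ^ N) = N * (\<Sum>i<n. b i)"
    unfolding eq
    by (subst degree_prod_sum_eq) (auto simp: degree_linear_power sum_distrib_left atLeast0LessThan ac_simps)
  show "lead_coeff (G_poly n b ^ N) = 1"
    unfolding eq lead_coeff_prod by (simp add: lead_coeff_power)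
qed

lemma not_dvd_prime_power_decompose:
  fixes p m :: nat
  assumes "prime p" "\<not> p ^ r dvd m"
  obtains k u where "k < r" "m = p ^ k * u" "\<not> p dvd u"
proof -
  have "m \<noteq> 0" using assms(2) by (metis dvd_0_right)
  moreover have "\<not> is_unit p" using assms(1) by (metis not_prime_unit)
  ultimately obtain u where "m = p ^ multiplicity p m * u" "\<not> p dvd u"
    using multiplicity_decompose' by blast
  moreover have "multiplicity p m < r"
    using assms(2) power_dvd_iff_le_multiplicity[OF \<open>m \<noteq> 0\<close> \<open>\<not> is_unit p\<close>, of r] by simp
  ultimately show ?thesis using that by blast
qed

lemma nondivisible_term_in_filtration:
  assumes "prime p" "r \<ge> 1" "L \<ge> 1" "m \<le> L * p ^ r - 1" "\<not> p ^ r dvd m"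
    and lower: "\<And>k l'. k < r \<Longrightarrow> l' \<ge> 1 \<Longrightarrow>
      in_filtration n p A W k k (Ivec n (\<lambda>_. Mr p r) (l' * p ^ k - 1))"
  shows "in_filtration n p A W r r
    (\<lambda>j. coeff (G_poly n b ^ p ^ r) m * Ivec n (\<lambda>_. Mr p r) (L * p ^ r - 1 - m) j)"
proof -
  have p0: "p > 0" using assms(1) by (simp add: prime_gt_0_nat)
  obtain k u where "k < r" and u: "m = p ^ k * u" "\<not> p dvd u"
    using not_dvd_prime_power_decompose[OF assms(1,5)] .
  obtain q where q: "coeff (G_poly n b ^ p ^ r) m = of_int (int p ^ (r - k)) * q" "quasi_const n p k q"
    using coeff_power_factor[OF coeffs_in_Zz_G_poly assms(1) less_imp_le[OF \<open>k < r\<close>] u] by blast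
  have prk: "p ^ r = p ^ (r - k) * p ^ k" using \<open>k < r\<close> by (simp flip: power_add)
  have "L * p ^ r > 0" using assms(3) p0 by simp
  then have "m < L * p ^ r" using assms(4) by linarith
  then have "u * p ^ k < (L * p ^ (r - k)) * p ^ k" unfolding u(1) prk by (simp add: ac_simps)
  then have "u < L * p ^ (r - k)" by simp
  define l' where "l' = L * p ^ (r - k) - u"
  have "l' \<ge> 1" using \<open>u < L * p ^ (r - k)\<close> unfolding l'_def by simp
  have idx: "L * p ^ r - 1 - m = l' * p ^ k - 1"
  proof -
    have "l' * p ^ k = L * p ^ (r - k) * p ^ k - u * p ^ k"
      unfolding l'_def by (simp add: diff_mult_distrib)
    also have "\<dots> = L * p ^ r - m" unfolding prk u(1) by (simp add: ac_simps)
    finally show ?thesis by simp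
  qed
  have "in_filtration n p A W k k (\<lambda>j. q * Ivec n (\<lambda>_. Mr p r) (l' * p ^ k - 1) j)"
    by (rule in_filtration_scale[OF lower[OF \<open>k < r\<close> \<open>l' \<ge> 1\<close>] q(2)])
  then have "in_filtration n p A W r k
      (\<lambda>j. of_int (int p ^ (r - k)) * (q * Ivec n (\<lambda>_. Mr p r) (l' * p ^ k - 1) j))"
    by (rule in_filtration_lift) (use \<open>k < r\<close> in auto)
  then have "in_filtration n p A W r r
      (\<lambda>j. of_int (int p ^ (r - k)) * (q * Ivec n (\<lambda>_. Mr p r) (l' * p ^ k - 1) j))"
    by (rule in_filtration_mono) (use \<open>k < r\<close> in auto)
  then show ?thesis
    by (rule in_filtration_subst) (simp only: q(1) idx mult.assoc)
qed

lemma convolution_term_in_filtration: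
  assumes "prime p" "odd p" "r \<ge> 1" "L \<ge> 1" "m \<le> L * p ^ r - 1"
    and lower: "\<And>k l'. k < r \<Longrightarrow> l' \<ge> 1 \<Longrightarrow>
      in_filtration (2*g+1) p A W k k (Ivec (2*g+1) (\<lambda>_. Mr p r) (l' * p ^ k - 1))"
    and top: "\<And>a. m = a * p ^ r \<Longrightarrow> a < L \<Longrightarrow> L - a \<le> g \<Longrightarrow>
      coeff (G_poly (2*g+1) b ^ p ^ r) m \<noteq> 0 \<Longrightarrow>
      in_filtration (2*g+1) p A W r r (Istd (2*g+1) p r (L - a))"
  shows "in_filtration (2*g+1) p A W r r
    (\<lambda>j. coeff (G_poly (2*g+1) b ^ p ^ r) m * Ivec (2*g+1) (\<lambda>_. Mr p r) (L * p ^ r - 1 - m) j)"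
proof (cases "p ^ r dvd m")
  case True
  let ?q = "coeff (G_poly (2*g+1) b ^ p ^ r) m"
  have p1: "p > 1" using prime_gt_1_nat[OF assms(1)] .
  obtain a where a: "m = a * p ^ r" using True by (metis dvdE mult.commute)
  have "L * p ^ r > 0" using assms(4) p1 by simp
  then have "a * p ^ r < L * p ^ r" using a assms(5) by linarith
  then have "a < L" by simp
  have idx: "L * p ^ r - 1 - m = (L - a) * p ^ r - 1"
    using a \<open>a < L\<close> by (simp add: diff_mult_distrib)
  consider "?q = 0" | "L - a > g" | "?q \<noteq> 0" "L - a \<le> g"
    using not_le by blast
  then show ?thesis
  proof cases
    case 1
    then show ?thesis by (simp add: in_filtration_zero)
  next
    case 2
    have "Ivec (2*g+1) (\<lambda>_. Mr p r) (L * p ^ r - 1 - m) j = 0" for j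
      unfolding idx using Istd_eq_0[OF assms(2) p1 assms(3) 2, of j] by (simp only: Istd_eq_Ivec_Mr)
    then show ?thesis by (simp only: mult_zero_right in_filtration_zero)
  next
    case 3
    have "quasi_const (2*g+1) p r ?q"
      by (rule coeff_power_quasi_const[OF coeffs_in_Zz_G_poly]) (use p1 in simp)
    from in_filtration_scale[OF top[OF a \<open>a < L\<close> 3(2,1)] this]
    show ?thesis unfolding idx by (simp only: Istd_eq_Ivec_Mr)
  qed
next
  case False
  then show ?thesis
    using nondivisible_term_in_filtration[OF assms(1,3,4,5) False lower] by blast
qed

subsection \<open>The two inclusions\<close>

abbreviation Igen :: "nat \<Rightarrow> nat \<Rightarrow> (nat \<Rightarrow> nat) \<Rightarrow> nat \<Rightarrow> nat \<Rightarrow> nat \<Rightarrow> mpoly" where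
  "Igen n p M r l \<equiv> Ivec n M (l * p ^ r - 1)"

lemma int_power_dvd_lower:
  "int p ^ r dvd x \<Longrightarrow> k \<le> r \<Longrightarrow> int p ^ k dvd x"
  by (rule dvd_trans[OF le_imp_power_dvd])

lemma Ivec_in_Istd_filtration:
  assumes "prime p" "odd p" "\<forall>i<2*g+1. int p ^ r dvd 2 * int (M i) + 1" "l \<ge> 1"
  shows "in_filtration (2*g+1) p {1..g} (Istd (2*g+1) p) r r (Igen (2*g+1) p M r l)"
  using assms(3,4)
proof (induction r arbitrary: M l rule: less_induct)
  case (less r)
  show ?case
  proof (cases "r = 0")
    case True
    then show ?thesis by (simp add: in_filtration_mod_one)
  next
    case False
    then have r1: "r \<ge> 1" by simp
    have Mr1: "Mr p r \<ge> 1" using Mr_pos[OF assms(2) prime_gt_1_nat[OF assms(1)] r1] .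
    define b where "b i = (M i - Mr p r) div p ^ r" for i
    have b: "M i = Mr p r + p ^ r * b i" if "i < 2*g+1" for i
      unfolding b_def using eq_Mr_plus_multiple[OF assms(2)] less.prems(1) that by blast
    have lower: "in_filtration (2*g+1) p {1..g} (Istd (2*g+1) p) k k (Ivec (2*g+1) (\<lambda>_. Mr p r) (l' * p ^ k - 1))"
      if "k < r" "l' \<ge> 1" for k l'
      using less.IH[OF that(1) _ that(2), of "\<lambda>_. Mr p r"] power_dvd_double_Mr_Suc[OF assms(2)] that(1)
      by simp
    have "in_filtration (2*g+1) p {1..g} (Istd (2*g+1) p) r r
      (\<lambda>j. \<Sum>m\<le>l * p ^ r - 1. coeff (G_poly (2*g+1) b ^ p ^ r) m *
          Ivec (2*g+1) (\<lambda>_. Mr p r) (l * p ^ r - 1 - m) j)"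
    proof (rule in_filtration_sum)
      fix m assume "m \<in> {..l * p ^ r - 1}"
      then show "in_filtration (2*g+1) p {1..g} (Istd (2*g+1) p) r r
          (\<lambda>j. coeff (G_poly (2*g+1) b ^ p ^ r) m * Ivec (2*g+1) (\<lambda>_. Mr p r) (l * p ^ r - 1 - m) j)"
        by (intro convolution_term_in_filtration[OF assms(1,2) r1 less.prems(2) _ lower])
          (auto intro!: in_filtration_generator[OF r1])
    qed simp
    then show ?thesis
      by (rule in_filtration_subst) (rule Ivec_eq_convolution[OF b Mr1])
  qed
qed

text \<open>\<open>G^(p^r)\<close> is monic of degree \<open>p^r D\<close>, so the term \<open>m = p^r D\<close> of the convolution
  is the standard vector itself.\<close>

lemma Ivec_eq_Istd_plus_lower_terms:
  assumes "odd p" "p > 1" "r \<ge> 1" "\<And>i. i < n \<Longrightarrow> M i = Mr p r + p ^ r * b i" "l \<ge> 1"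
  defines "D \<equiv> \<Sum>i<n. b i"
  defines "K \<equiv> (l + D) * p ^ r - 1"
  shows "Ivec n M K j = Istd n p r l j
    + (\<Sum>m\<in>{..K} - {p ^ r * D}. coeff (G_poly n b ^ p ^ r) m * Ivec n (\<lambda>_. Mr p r) (K - m) j)"
proof -
  have "1 \<le> l * p ^ r" using assms(2,5) by simp
  then have "p ^ r * D \<in> {..K}"
    unfolding K_def add_mult_distrib atMost_iff by (simp only: mult.commute[of D])
  moreover have "coeff (G_poly n b ^ p ^ r) (p ^ r * D) = 1"
    using G_poly_power_lead_coeff[of n b "p ^ r"] unfolding G_poly_power_degree D_def .
  moreover have "K - p ^ r * D = l * p ^ r - 1"
    unfolding K_def by (simp add: algebra_simps)
  ultimately show ?thesis
    using Ivec_eq_convolution[OF assms(4) Mr_pos[OF assms(1-3)], where k=K and j=j]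
    by (simp add: sum.remove Istd_eq_Ivec_Mr)
qed

lemma Istd_in_Igen_filtration_step:
  assumes "prime p" "odd p" "r \<ge> 1" "\<And>i. i < 2*g+1 \<Longrightarrow> M i = Mr p r + p ^ r * b i" "l \<ge> 1"
    and lower: "\<And>k l'. k < r \<Longrightarrow> l' \<ge> 1 \<Longrightarrow>
      in_filtration (2*g+1) p {l. 1 \<le> l} (Igen (2*g+1) p M) k k (Ivec (2*g+1) (\<lambda>_. Mr p r) (l' * p ^ k - 1))"
    and larger: "\<And>l'. l < l' \<Longrightarrow> l' \<le> g \<Longrightarrow>
      in_filtration (2*g+1) p {l. 1 \<le> l} (Igen (2*g+1) p M) r r (Istd (2*g+1) p r l')"
  shows "in_filtration (2*g+1) p {l. 1 \<le> l} (Igen (2*g+1) p M) r r (Istd (2*g+1) p r l)"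
proof -
  let ?n = "2*g+1" and ?A = "{l::nat. 1 \<le> l}" and ?W = "Igen (2*g+1) p M"
  define D where "D = (\<Sum>i<?n. b i)"
  let ?K = "(l + D) * p ^ r - 1" and ?q = "\<lambda>m. coeff (G_poly ?n b ^ p ^ r) m"
  have p1: "p > 1" using prime_gt_1_nat[OF assms(1)] .
  have rest: "in_filtration ?n p ?A ?W r r
      (\<lambda>j. \<Sum>m\<in>{..?K} - {p ^ r * D}. ?q m * Ivec ?n (\<lambda>_. Mr p r) (?K - m) j)"
  proof (rule in_filtration_sum)
    fix m assume m: "m \<in> {..?K} - {p ^ r * D}"
    show "in_filtration ?n p ?A ?W r r (\<lambda>j. ?q m * Ivec ?n (\<lambda>_. Mr p r) (?K - m) j)"
    proof (rule convolution_term_in_filtration[OF assms(1-3) _ _ lower])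
      fix a assume a: "m = a * p ^ r" "a < l + D" "l + D - a \<le> g" "?q m \<noteq> 0"
      have "a * p ^ r \<le> D * p ^ r"
        using le_degree[OF a(4)] a(1) by (simp add: G_poly_power_degree D_def mult.commute)
      moreover have "a \<noteq> D" using a(1) m by (simp add: mult.commute)
      ultimately have "a < D" using p1 by simp
      then show "in_filtration ?n p ?A ?W r r (Istd ?n p r (l + D - a))"
        using larger[of "l + D - a"] a(3) by simp
    qed (use m assms(5) in auto)
  qed simp
  have top: "in_filtration ?n p ?A ?W r r (Ivec ?n M ?K)"
    using in_filtration_generator[OF assms(3), of "l + D" ?A ?n p ?W] assms(5) by simp
  have split: "Ivec ?n M ?K j = Istd ?n p r l j
      + (\<Sum>m\<in>{..?K} - {p ^ r * D}. ?q m * Ivec ?n (\<lambda>_. Mr p r) (?K - m) j)" for j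
    unfolding D_def by (rule Ivec_eq_Istd_plus_lower_terms[OF assms(2) p1 assms(3,4,5)])
  have "in_filtration ?n p ?A ?W r r (\<lambda>j. of_int (- 1) *
      (\<Sum>m\<in>{..?K} - {p ^ r * D}. ?q m * Ivec ?n (\<lambda>_. Mr p r) (?K - m) j))"
    by (rule in_filtration_scale[OF rest quasi_const_of_int])
  from in_filtration_add[OF top this] show ?thesis
    by (rule in_filtration_subst) (simp only: split, simp)
qed

lemma Istd_in_Igen_filtration_level:
  assumes "prime p" "odd p" "r \<ge> 1" "\<forall>i<2*g+1. int p ^ r dvd 2 * int (M i) + 1"
    and lower: "\<And>k l'. k < r \<Longrightarrow> l' \<ge> 1 \<Longrightarrow>
      in_filtration (2*g+1) p {l. 1 \<le> l} (Igen (2*g+1) p M) k k (Ivec (2*g+1) (\<lambda>_. Mr p r) (l' * p ^ k - 1))"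
    and "l \<in> {1..g}"
  shows "in_filtration (2*g+1) p {l. 1 \<le> l} (Igen (2*g+1) p M) r r (Istd (2*g+1) p r l)"
  using assms(6)
proof (induction "g - l" arbitrary: l rule: less_induct)
  case less
  define b where "b i = (M i - Mr p r) div p ^ r" for i
  have b: "M i = Mr p r + p ^ r * b i" if "i < 2*g+1" for i
    unfolding b_def using eq_Mr_plus_multiple[OF assms(2)] assms(4) that by blast
  show ?case
    by (rule Istd_in_Igen_filtration_step[OF assms(1-3) b _ lower]) (use less in auto)
qed

lemma Istd_in_Igen_filtration:
  assumes "prime p" "odd p" "\<forall>i<2*g+1. int p ^ r dvd 2 * int (M i) + 1" "l \<in> {1..g}"
  shows "in_filtration (2*g+1) p {l. 1 \<le> l} (Igen (2*g+1) p M) r r (Istd (2*g+1) p r l)"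
  using assms(3,4)
proof (induction r arbitrary: l rule: less_induct)
  case (less r)
  show ?case
  proof (cases "r = 0")
    case True
    then show ?thesis by (simp add: in_filtration_mod_one)
  next
    case False
    then have r1: "r \<ge> 1" by simp
    have lower: "in_filtration (2*g+1) p {l. 1 \<le> l} (Igen (2*g+1) p M) k k
        (Ivec (2*g+1) (\<lambda>_. Mr p r) (l' * p ^ k - 1))" if "k < r" "l' \<ge> 1" for k l'
    proof (rule in_filtration_transfer)
      show "in_filtration (2*g+1) p {1..g} (Istd (2*g+1) p) k k
          (Ivec (2*g+1) (\<lambda>_. Mr p r) (l' * p ^ k - 1))"
        using Ivec_in_Istd_filtration[OF assms(1,2) _ that(2), where r=k and M="\<lambda>_. Mr p r"]
          power_dvd_double_Mr_Suc[OF assms(2)] that(1) by simp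
      fix r' l'' assume "r' \<in> {1..k}" "l'' \<in> {1..g}"
      moreover have "\<forall>i<2*g+1. int p ^ r' dvd 2 * int (M i) + 1"
        using less.prems(1) \<open>r' \<in> {1..k}\<close> that(1) by (auto intro: int_power_dvd_lower)
      ultimately show "in_filtration (2*g+1) p {l. 1 \<le> l} (Igen (2*g+1) p M) r' r' (Istd (2*g+1) p r' l'')"
        using less.IH[of r'] that(1) by auto
    qed simp
    show ?thesis
      by (rule Istd_in_Igen_filtration_level[OF assms(1,2) r1 less.prems(1) lower less.prems(2)])
  qed
qed

lemma Istd_filtration_iff_Igen_filtration:
  assumes "prime p" "odd p" "\<forall>i<2*g+1. int p ^ s dvd 2 * int (M i) + 1" "t \<le> s"
  shows "in_filtration (2*g+1) p {1..g} (Istd (2*g+1) p) s t V \<longleftrightarrow>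
    in_filtration (2*g+1) p {l. 1 \<le> l} (Igen (2*g+1) p M) s t V"
proof -
  have dvd: "\<forall>i<2*g+1. int p ^ r dvd 2 * int (M i) + 1" if "r \<in> {1..t}" for r
    using assms(3,4) that by (auto intro: int_power_dvd_lower)
  show ?thesis
  proof
    assume "in_filtration (2*g+1) p {1..g} (Istd (2*g+1) p) s t V"
    then show "in_filtration (2*g+1) p {l. 1 \<le> l} (Igen (2*g+1) p M) s t V"
      using assms(4) by (rule in_filtration_transfer) (use Istd_in_Igen_filtration assms(1,2) dvd in blast)
  next
    assume "in_filtration (2*g+1) p {l. 1 \<le> l} (Igen (2*g+1) p M) s t V"
    then show "in_filtration (2*g+1) p {1..g} (Istd (2*g+1) p) s t V"
      using assms(4) by (rule in_filtration_transfer) (use Ivec_in_Istd_filtration assms(1,2) dvd in blast)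
  qed
qed

lemma reductions_of_filtration:
  "{(\<lambda>j. pi_mod p s (V j)) | V. in_filtration n p A W s t V} =
   {(\<lambda>j. pi_mod p s (filtration_comb p W c s t j)) | c. admissible_coeffs n p A t c}"
proof (intro set_eqI iffI)
  fix x
  assume "x \<in> {(\<lambda>j. pi_mod p s (V j)) | V. in_filtration n p A W s t V}"
  then obtain V c where x: "x = (\<lambda>j. pi_mod p s (V j))" and adm: "admissible_coeffs n p A t c"
    and V: "\<forall>j. \<exists>h. V j = filtration_comb p W c s t j + of_int (int p ^ s) * h"
    unfolding in_filtration_def by blast
  have "x = (\<lambda>j. pi_mod p s (filtration_comb p W c s t j)) \<and> admissible_coeffs n p A t c"
    unfolding x pi_mod_congruent_comb[OF V] using adm by simp
  then show "x \<in> {(\<lambda>j. pi_mod p s (filtration_comb p W c s t j)) | c. admissible_coeffs n p A t c}"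
    by (intro CollectI exI[of _ c])
next
  fix x
  assume "x \<in> {(\<lambda>j. pi_mod p s (filtration_comb p W c s t j)) | c. admissible_coeffs n p A t c}"
  then obtain c where x: "x = (\<lambda>j. pi_mod p s (filtration_comb p W c s t j))"
    and adm: "admissible_coeffs n p A t c"
    by blast
  have "\<forall>j. \<exists>h. filtration_comb p W c s t j = filtration_comb p W c s t j + of_int (int p ^ s) * h"
    by (intro allI exI[of _ "0::mpoly"]) simp
  with adm have "in_filtration n p A W s t (filtration_comb p W c s t)"
    unfolding in_filtration_def by blast
  with x have "x = (\<lambda>j. pi_mod p s (filtration_comb p W c s t j))
      \<and> in_filtration n p A W s t (filtration_comb p W c s t)" by blast
  then show "x \<in> {(\<lambda>j. pi_mod p s (V j)) | V. in_filtration n p A W s t V}"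
    by (intro CollectI exI[of _ "filtration_comb p W c s t"])
qed

lemma Mstd_eq_reductions:
  "Mstd p g s t = {(\<lambda>j. pi_mod p s (V j)) | V. in_filtration (2*g+1) p {1..g} (Istd (2*g+1) p) s t V}"
  unfolding reductions_of_filtration
proof (intro set_eqI iffI)
  let ?sum = "\<lambda>c j. \<Sum>r\<in>{1..t}. \<Sum>l\<in>{1..g}. c r l * of_int (int p ^ (s - r)) * Istd (2*g+1) p r l j"
  have comb: "filtration_comb p (Istd (2*g+1) p) c s t j = ?sum c j"
    if "admissible_coeffs (2*g+1) p {1..g} t c" for c j
    by (rule filtration_comb_eq_sum) (use admissible_coeffsD(2)[OF that] in auto)
  fix x
  {
    assume "x \<in> Mstd p g s t"
    then obtain c where x: "x = (\<lambda>j. pi_mod p s (?sum c j))"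
      and qc: "\<forall>r\<in>{1..t}. \<forall>l\<in>{1..g}. quasi_const (2*g+1) p r (c r l)"
      unfolding Mstd_def by blast
    define c' where "c' r l = (if l \<in> {1..g} then c r l else 0)" for r l
    have adm: "admissible_coeffs (2*g+1) p {1..g} t c'"
      using qc unfolding admissible_coeffs_def c'_def by (auto intro: finite_subset[of _ "{1..g}"])
    have "?sum c j = filtration_comb p (Istd (2*g+1) p) c' s t j" for j
      unfolding comb[OF adm] by (simp add: c'_def)
    then have "x = (\<lambda>j. pi_mod p s (filtration_comb p (Istd (2*g+1) p) c' s t j))"
      unfolding x by simp
    with adm show "x \<in> {(\<lambda>j. pi_mod p s (filtration_comb p (Istd (2*g+1) p) c s t j)) | c.
        admissible_coeffs (2*g+1) p {1..g} t c}"
      by blast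
  next
    assume "x \<in> {(\<lambda>j. pi_mod p s (filtration_comb p (Istd (2*g+1) p) c s t j)) | c.
        admissible_coeffs (2*g+1) p {1..g} t c}"
    then obtain c where "x = (\<lambda>j. pi_mod p s (filtration_comb p (Istd (2*g+1) p) c s t j))"
      and adm: "admissible_coeffs (2*g+1) p {1..g} t c"
      by blast
    moreover have "\<forall>r\<in>{1..t}. \<forall>l\<in>{1..g}. quasi_const (2*g+1) p r (c r l)"
      using admissible_coeffsD(3)[OF adm] by blast
    ultimately show "x \<in> Mstd p g s t"
      unfolding Mstd_def comb[OF adm] by blast
  }
qed

lemma Mgen_eq_reductions:
  "Mgen p g s t M =
    {(\<lambda>j. pi_mod p s (V j)) | V. in_filtration (2*g+1) p {l. 1 \<le> l} (Igen (2*g+1) p M) s t V}"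
  unfolding reductions_of_filtration
proof (intro set_eqI iffI)
  let ?sum = "\<lambda>c j. \<Sum>r\<in>{1..t}. \<Sum>l\<in>{l. 1 \<le> l \<and> c r l \<noteq> 0}.
    c r l * of_int (int p ^ (s - r)) * Ivec (2*g+1) M (l * p ^ r - 1) j"
  fix x
  {
    assume "x \<in> Mgen p g s t M"
    then obtain c where x: "x = (\<lambda>j. pi_mod p s (?sum c j))"
      and c: "\<forall>r\<in>{1..t}. finite {l. c r l \<noteq> 0} \<and> (\<forall>l \<ge> 1. quasi_const (2*g+1) p r (c r l))"
      unfolding Mgen_def by blast
    define c' where "c' r l = (if 1 \<le> l then c r l else 0)" for r l
    have adm: "admissible_coeffs (2*g+1) p {l. 1 \<le> l} t c'"
      using c unfolding admissible_coeffs_def c'_def by (auto intro: finite_subset[of _ "{l. c _ l \<noteq> 0}"])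
    have supp: "{l. c' r l \<noteq> 0} = {l. 1 \<le> l \<and> c r l \<noteq> 0}" for r
      by (auto simp: c'_def)
    have "?sum c j = filtration_comb p (Igen (2*g+1) p M) c' s t j" for j
      unfolding filtration_comb_def supp by (intro sum.cong refl) (simp add: c'_def)
    then have "x = (\<lambda>j. pi_mod p s (filtration_comb p (Igen (2*g+1) p M) c' s t j))"
      unfolding x by simp
    with adm show "x \<in> {(\<lambda>j. pi_mod p s (filtration_comb p (Igen (2*g+1) p M) c s t j)) | c.
        admissible_coeffs (2*g+1) p {l. 1 \<le> l} t c}"
      by blast
  next
    assume "x \<in> {(\<lambda>j. pi_mod p s (filtration_comb p (Igen (2*g+1) p M) c s t j)) | c.
        admissible_coeffs (2*g+1) p {l. 1 \<le> l} t c}"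
    then obtain c where x: "x = (\<lambda>j. pi_mod p s (filtration_comb p (Igen (2*g+1) p M) c s t j))"
      and adm: "admissible_coeffs (2*g+1) p {l. 1 \<le> l} t c"
      by blast
    have supp: "{l. c r l \<noteq> 0} = {l. 1 \<le> l \<and> c r l \<noteq> 0}" if "r \<in> {1..t}" for r
      using admissible_coeffsD(2)[OF adm that] by auto
    have "filtration_comb p (Igen (2*g+1) p M) c s t j = ?sum c j" for j
      unfolding filtration_comb_def by (rule sum.cong[OF refl]) (simp only: supp)
    then have "x = (\<lambda>j. pi_mod p s (?sum c j))"
      unfolding x by simp
    moreover have "\<forall>r\<in>{1..t}. finite {l. c r l \<noteq> 0} \<and> (\<forall>l \<ge> 1. quasi_const (2*g+1) p r (c r l))"
      using admissible_coeffsD(1,3)[OF adm] by auto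
    ultimately show "x \<in> Mgen p g s t M"
      unfolding Mgen_def by blast
  }
qed

theorem theorem5p2:
  fixes p g s :: nat and M :: "nat \<Rightarrow> nat"
  assumes "prime p" and "odd p" and "g \<ge> 1" and "p > 2*g+1" and "s \<ge> 1"
    and "\<forall>i < 2*g+1. M i > 0 \<and> (int p ^ s) dvd (2 * int (M i) + 1)"
  shows "\<forall>t \<in> {1..s}. Mgen p g s t M = Mstd p g s t"
proof
  fix t assume "t \<in> {1..s}"
  moreover have "\<forall>i<2*g+1. int p ^ s dvd 2 * int (M i) + 1"
    using assms(6) by blast
  ultimately show "Mgen p g s t M = Mstd p g s t"
    unfolding Mstd_eq_reductions Mgen_eq_reductions
    using Istd_filtration_iff_Igen_filtration[OF assms(1,2)] by simp
qed

end
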